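(* Let $x_0\in(0,1)$ and $F(y;x_0)=\frac{e^{(x_0-2)y}-e^{-x_0y}}{2(1-e^{-2y})}$ for $y>0$. Then $F(\cdot;x_0)$ is strictly increasing on $\big(\frac{\ln(2-x_0)-\ln x_0}{2(1-x_0)},\infty\big)$. *)

theory Defs
  imports Complex_Main
begin

definition F :: "real \<Rightarrow> real \<Rightarrow> real" where
  "F x0 y = (exp ((x0 - 2) * y) - exp (- x0 * y)) / (2 * (1 - exp (- 2 * y)))"

end

theory Submission
  imports Defs
begin

text \<open>For \<open>y > 0\<close> one has \<open>F(y; x\<^sub>0) = - sinh (c y) / (2 sinh y)\<close> with \<open>c = 1 - x\<^sub>0 \<in> (0,1)\<close>.
  The quotient \<open>sinh (c y) / sinh y\<close> is strictly decreasing on \<open>(0,\<infinity>)\<close>: the numerator of its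
  derivative, \<open>c cosh (c y) sinh y - sinh (c y) cosh y\<close>, vanishes at \<open>0\<close> and has derivative
  \<open>(c\<^sup>2 - 1) sinh (c y) sinh y < 0\<close>. So \<open>F(\<cdot>; x\<^sub>0)\<close> is strictly increasing on all of \<open>(0,\<infinity>)\<close>,
  and the threshold in the theorem is nonnegative because \<open>x\<^sub>0 < 2 - x\<^sub>0\<close>.\<close>

lemma mult_cosh_mult_sinh_less_sinh_mult_cosh:
  fixes c y :: real
  assumes "0 < c" "c < 1" and "0 < y"
  shows "c * cosh (c * y) * sinh y < sinh (c * y) * cosh y"
proof -
  let ?h = "\<lambda>t::real. sinh (c * t) * cosh t - c * cosh (c * t) * sinh t"
  have "?h 0 < ?h y"
  proof (rule DERIV_pos_imp_increasing_open[OF \<open>0 < y\<close>])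
    fix t :: real assume t: "0 < t" "t < y"
    have "(?h has_field_derivative (1 - c\<^sup>2) * sinh (c * t) * sinh t) (at t)"
      by (auto intro!: derivative_eq_intros simp: algebra_simps power2_eq_square)
    moreover have "c\<^sup>2 < 1"
      using assms by (simp add: power_less_one_iff abs_less_iff)
    then have "(1 - c\<^sup>2) * sinh (c * t) * sinh t > 0"
      using assms t by simp
    ultimately show "\<exists>d. (?h has_field_derivative d) (at t) \<and> d > 0" by blast
  qed (intro continuous_intros)
  then show ?thesis by simp
qed

lemma sinh_mult_divide_sinh_strict_antimono:
  fixes c a b :: real
  assumes "0 < c" "c < 1" and "0 < a" "a < b"
  shows "sinh (c * b) / sinh b < sinh (c * a) / sinh a"
proof -
  let ?q = "\<lambda>t::real. - sinh (c * t) / sinh t"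
  have "?q a < ?q b"
  proof (rule DERIV_pos_imp_increasing[OF \<open>a < b\<close>])
    fix t assume "a \<le> t" "t \<le> b"
    then have "sinh t > 0" using assms by simp
    then have "(?q has_field_derivative
        (sinh (c * t) * cosh t - c * cosh (c * t) * sinh t) / (sinh t)\<^sup>2) (at t)"
      by (auto intro!: derivative_eq_intros simp: field_simps power2_eq_square)
    moreover have "(sinh (c * t) * cosh t - c * cosh (c * t) * sinh t) / (sinh t)\<^sup>2 > 0"
      using mult_cosh_mult_sinh_less_sinh_mult_cosh[of c t] assms \<open>a \<le> t\<close> \<open>sinh t > 0\<close>
      by simp
    ultimately show "\<exists>d. (?q has_field_derivative d) (at t) \<and> d > 0" by blast
  qed
  then show ?thesis by simp
qed

lemma F_eq_sinh:
  fixes x0 y :: real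
  assumes "0 < y"
  shows "F x0 y = - sinh ((1 - x0) * y) / (2 * sinh y)"
proof -
  let ?c = "1 - x0"
  have num: "exp ((x0 - 2) * y) - exp (- x0 * y) = - 2 * exp (-y) * sinh (?c * y)"
    unfolding sinh_def by (simp add: algebra_simps flip: exp_add)
  have den: "2 * (1 - exp (-2 * y)) = 4 * exp (-y) * sinh y"
    unfolding sinh_def by (simp add: algebra_simps flip: exp_add)
  have "sinh y > 0" using assms by simp
  then show ?thesis unfolding F_def num den by (simp add: field_simps)
qed

lemma F_strict_mono_on_pos:
  fixes x0 :: real
  assumes "0 < x0" "x0 < 1"
  shows "strict_mono_on {0<..} (F x0)"
proof (rule strict_mono_onI)
  fix a b :: real assume "a \<in> {0<..}" "a < b"
  then have "sinh ((1 - x0) * b) / sinh b < sinh ((1 - x0) * a) / sinh a"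
    using assms by (intro sinh_mult_divide_sinh_strict_antimono) auto
  then show "F x0 a < F x0 b"
    using \<open>a \<in> {0<..}\<close> \<open>a < b\<close> by (simp add: F_eq_sinh)
qed

theorem mainTheorem8:
  fixes x0 :: real
  assumes "0 < x0" and "x0 < 1"
  shows "strict_mono_on {(ln (2 - x0) - ln x0) / (2 * (1 - x0)) <..} (F x0)"
proof -
  have "ln x0 \<le> ln (2 - x0)" using assms by simp
  then have "0 \<le> (ln (2 - x0) - ln x0) / (2 * (1 - x0))" using assms by simp
  then have "{(ln (2 - x0) - ln x0) / (2 * (1 - x0)) <..} \<subseteq> {0<..}" by auto
  with F_strict_mono_on_pos[OF assms] show ?thesis
    by (simp add: strict_mono_on_def subset_eq)
qed

end
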